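(* Let $K$ be a field. For every positive integer $N$ there exist an integer $d\ge 2$ and integers $t_1<t_2<\cdots<t_{2d+1}$ such that the toric ideal $I_A\subset K[x_1,\ldots,x_{2d+1}]$ of the cyclic configuration $A=\{{\bf a}_{t_1},\ldots,{\bf a}_{t_{2d+1}}\}$ (which has height $2$) satisfies $\mathrm{Split}(I_A)\ge N$ and $\mathrm{Split}_{\mathrm{rad}}(I_A)\ge N$.
   Context: For an integer $t$ and an integer $d\ge 2$, ${\bf a}_t=(1,t,t^2,\ldots,t^{2d-2})^T\in\mathbb{Z}^{2d-1}$. The cyclic configuration $A$ is the set of columns of the $(2d-1)\times(2d+1)$ Vandermonde matrix $({\bf a}_{t_1}\ {\bf a}_{t_2}\ \cdots\ {\bf a}_{t_{2d+1}})$ with $t_1<\cdots<t_{2d+1}$ integers. The toric ideal $I_A$ is the kernel of $K[x_1,\ldots,x_{2d+1}]\to K[s_1^{\pm1},\ldots,s_{2d-1}^{\pm1}]$, $x_i\mapsto{\bf s}^{{\bf a}_{t_i}}$. $\mathrm{Split}(I_A)$ is the smallest integer $s$ such that there exist toric ideals $I_{A_1},\ldots,I_{A_s}\subset K[x_1,\ldots,x_{2d+1}]$ with $I_A=I_{A_1}+\cdots+I_{A_s}$ and $I_{A_i}\ne I_A$ for all $i$; $\mathrm{Split}_{\mathrm{rad}}(I_A)$ is the smallest integer $r$ such that there exist toric ideals $I_{A_1},\ldots,I_{A_r}$ with $I_A=\mathrm{rad}(I_{A_1}+\cdots+I_{A_r})$ and $I_{A_i}\ne I_A$ for all $i$. 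*)

theory Defs
  imports Main "HOL-Library.Poly_Mapping"
begin

(* Polynomials over a field K in variables x_0, x_1, ... : finitely supported maps from
 exponent vectors (nat \<Rightarrow>\<^sub>0 nat) to coefficients, with convolution product.
 Variable x_i (paper's x_(i+1)) corresponds to index i. *)
type_synonym 'k mpoly = "(nat \<Rightarrow>\<^sub>0 nat) \<Rightarrow>\<^sub>0 'k"

definition poly_ring :: "nat \<Rightarrow> ('k::zero) mpoly set" where
  "poly_ring n = {f. \<forall>m \<in> Poly_Mapping.keys f. \<forall>i. Poly_Mapping.lookup m i \<noteq> 0 \<longrightarrow> i < n}"

(* A configuration of n vectors in Z^r is given by a :: nat \<Rightarrow> nat \<Rightarrow> int, where
 a i j is the j-th coordinate of the i-th vector (i < n, j < r).
 The monomial map x_i \<mapsto> s^(a i) sends x^m to s^(expo r a m). *)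
definition expo :: "nat \<Rightarrow> (nat \<Rightarrow> nat \<Rightarrow> int) \<Rightarrow> (nat \<Rightarrow>\<^sub>0 nat) \<Rightarrow> (nat \<Rightarrow> int)" where
  "expo r a m = (\<lambda>j. if j < r then (\<Sum>i\<in>Poly_Mapping.keys m. int (Poly_Mapping.lookup m i) * a i j) else 0)"

(* Toric ideal: kernel of the K-algebra map K[x_0..x_(n-1)] \<rightarrow> K[s_0^(\<plusminus>1),...,s_(r-1)^(\<plusminus>1)],
 x_i \<mapsto> s^(a i). The image of f has, at the Laurent monomial s^e, the coefficient
 sum of the coefficients of f at monomials m with expo r a m = e; f is in the kernel iff
 all these coefficients vanish. *)
definition toric_ideal :: "nat \<Rightarrow> nat \<Rightarrow> (nat \<Rightarrow> nat \<Rightarrow> int) \<Rightarrow> ('k::field) mpoly set" where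
  "toric_ideal n r a = {f \<in> poly_ring n.
      \<forall>e. (\<Sum>m \<in> {m \<in> Poly_Mapping.keys f. expo r a m = e}. Poly_Mapping.lookup f m) = 0}"

definition ideal_sum :: "nat \<Rightarrow> (nat \<Rightarrow> ('k::field) mpoly set) \<Rightarrow> 'k mpoly set" where
  "ideal_sum s I = {\<Sum>i<s. f i | f. \<forall>i<s. f i \<in> I i}"

definition radical_in :: "nat \<Rightarrow> ('k::field) mpoly set \<Rightarrow> 'k mpoly set" where
  "radical_in n J = {f \<in> poly_ring n. \<exists>k>0. f ^ k \<in> J}"

(* The cyclic configuration: column i (i < 2d+1) is a_(t i) = (1, t i, ..., (t i)^(2d-2)) in Z^(2d-1). *)
definition cyclic_config :: "nat \<Rightarrow> (nat \<Rightarrow> int) \<Rightarrow> nat \<Rightarrow> nat \<Rightarrow> int" where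
  "cyclic_config d t = (\<lambda>i j. t i ^ j)"

definition has_splitting :: "nat \<Rightarrow> ('k::field) mpoly set \<Rightarrow> nat \<Rightarrow> bool" where
  "has_splitting n I s \<longleftrightarrow> (\<exists>(r :: nat \<Rightarrow> nat) (a :: nat \<Rightarrow> nat \<Rightarrow> nat \<Rightarrow> int).
      (\<forall>i<s. toric_ideal n (r i) (a i) \<noteq> I) \<and>
      I = ideal_sum s (\<lambda>i. toric_ideal n (r i) (a i)))"

definition has_rad_splitting :: "nat \<Rightarrow> ('k::field) mpoly set \<Rightarrow> nat \<Rightarrow> bool" where
  "has_rad_splitting n I s \<longleftrightarrow> (\<exists>(r :: nat \<Rightarrow> nat) (a :: nat \<Rightarrow> nat \<Rightarrow> nat \<Rightarrow> int).
      (\<forall>i<s. toric_ideal n (r i) (a i) \<noteq> I) \<and>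
      I = radical_in n (ideal_sum s (\<lambda>i. toric_ideal n (r i) (a i))))"

end

theory Submission
  imports Defs "HOL-Computational_Algebra.Polynomial"
begin

(* Take t_j = j. The relations among the columns form the rank-2 lattice L of integer vectors v
   with sum_j v_j j^k = 0 for k < 2d-1. Testing v against the nonnegative polynomial
   prod_(i in S) (x - i)^2 shows that a nonzero v in L which is nonpositive outside S has
   |S| >= d; so the finite-difference circuit c_e(j) = (-1)^j C(2d,j) (e - j) of L has exactly
   d positive entries, and the positive supports T_i of c_(2i), i <= d, are d+1 distinct d-sets.
   Evaluating at the 0/1 point with support T_i sends the binomial of c_(2i), which lies in I_A,
   to 1, but kills every toric ideal whose degree fibres do not separate monomials supported in
   T_i from the others. If a proper toric subideal of I_A does separate them, it contains a
   relation of L that is nonpositive outside T_i; two such relations for different T_i cannot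
   span L, hence are negative multiples of each other, so at most two T_i fail for each
   subideal. For d = 2N some T_i works for all of fewer than N subideals, and evaluation there
   separates I_A from the radical of their sum. *)

section \<open>Evaluation at 0/1 points\<close>

definition lin_ext :: "('a \<Rightarrow> 'k) \<Rightarrow> ('a \<Rightarrow>\<^sub>0 'k) \<Rightarrow> 'k::comm_ring_1" where
  "lin_ext \<phi> f = (\<Sum>m\<in>Poly_Mapping.keys f. Poly_Mapping.lookup f m * \<phi> m)"

lemma lin_ext_zero [simp]: "lin_ext \<phi> 0 = 0"
  by (simp add: lin_ext_def)

lemma lin_ext_single [simp]: "lin_ext \<phi> (Poly_Mapping.single m c) = c * \<phi> m"
  by (simp add: lin_ext_def)

lemma lin_ext_add: "lin_ext \<phi> (f + g) = lin_ext \<phi> f + lin_ext \<phi> g"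
  unfolding lin_ext_def by (rule setsum_keys_plus_distrib) (simp_all add: distrib_right)

lemma lin_ext_uminus: "lin_ext \<phi> (- f) = - lin_ext \<phi> f"
  by (simp add: lin_ext_def sum_negf)

lemma lin_ext_diff: "lin_ext \<phi> (f - g) = lin_ext \<phi> f - lin_ext \<phi> g"
  using lin_ext_add[of \<phi> f "- g"] by (simp add: lin_ext_uminus)

lemma lin_ext_sum: "lin_ext \<phi> (\<Sum>i\<in>I. f i) = (\<Sum>i\<in>I. lin_ext \<phi> (f i))"
  by (induction I rule: infinite_finite_induct) (auto simp: lin_ext_add)

lemma update_eq_add_single:
  "a \<notin> Poly_Mapping.keys f \<Longrightarrow> Poly_Mapping.update a b f = f + Poly_Mapping.single a b"
  by (rule poly_mapping_eqI) (auto simp: lookup_update lookup_add lookup_single in_keys_iff when_def)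

context
  fixes \<phi> :: "'a::comm_monoid_add \<Rightarrow> 'k::comm_ring_1"
  assumes \<phi>_add: "\<And>a b. \<phi> (a + b) = \<phi> a * \<phi> b"
begin

lemma lin_ext_single_mult: "lin_ext \<phi> (Poly_Mapping.single a c * g) = c * \<phi> a * lin_ext \<phi> g"
proof (induction g rule: update_induct)
  case (update g b e)
  then show ?case
    by (simp add: update_eq_add_single distrib_left lin_ext_add mult_single \<phi>_add)
qed simp

lemma lin_ext_mult: "lin_ext \<phi> (f * g) = lin_ext \<phi> f * lin_ext \<phi> g"
proof (induction f rule: update_induct)
  case (update f a c)
  then show ?case
    by (simp add: update_eq_add_single distrib_right lin_ext_add lin_ext_single_mult)
qed simp

lemma lin_ext_power:
  assumes "\<phi> 0 = 1"
  shows "lin_ext \<phi> (f ^ k) = lin_ext \<phi> f ^ k"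
proof (induction k)
  case 0
  show ?case using lin_ext_single[of \<phi> 0 1] by (simp add: assms)
qed (simp add: lin_ext_mult)

end

abbreviation eval_indicator :: "nat set \<Rightarrow> 'k::comm_ring_1 mpoly \<Rightarrow> 'k" where
  "eval_indicator T \<equiv> lin_ext (\<lambda>m. of_bool (Poly_Mapping.keys m \<subseteq> T))"

lemma keys_add_monomial:
  "Poly_Mapping.keys (m + m' :: nat \<Rightarrow>\<^sub>0 nat) = Poly_Mapping.keys m \<union> Poly_Mapping.keys m'"
  by (auto simp: in_keys_iff lookup_add)

lemma eval_indicator_power: "eval_indicator T (f ^ k) = eval_indicator T f ^ k"
  by (rule lin_ext_power) (simp_all add: keys_add_monomial)

section \<open>Toric ideals and their lattices of relations\<close>

definition in_kernel :: "nat \<Rightarrow> nat \<Rightarrow> (nat \<Rightarrow> nat \<Rightarrow> int) \<Rightarrow> (nat \<Rightarrow> int) \<Rightarrow> bool" where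
  "in_kernel n r a v \<longleftrightarrow> (\<forall>k<r. (\<Sum>i<n. v i * a i k) = 0)"

lemma in_kernel_lincomb:
  "in_kernel n r a u \<Longrightarrow> in_kernel n r a w \<Longrightarrow> in_kernel n r a (\<lambda>i. x * u i + y * w i)"
  by (simp add: in_kernel_def algebra_simps sum.distrib flip: sum_distrib_left)

lemma in_kernel_uminus: "in_kernel n r a v \<Longrightarrow> in_kernel n r a (\<lambda>i. - v i)"
  using in_kernel_lincomb[of n r a v v "-1" 0] by simp

lemma in_kernel_mult_cancel:
  "c \<noteq> 0 \<Longrightarrow> in_kernel n r a (\<lambda>i. c * v i) \<Longrightarrow> in_kernel n r a v"
  by (simp add: in_kernel_def mult.assoc flip: sum_distrib_left)

lemma in_kernel_cong:
  "(\<And>i. i < n \<Longrightarrow> u i = w i) \<Longrightarrow> in_kernel n r a u \<longleftrightarrow> in_kernel n r a w"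
  by (simp add: in_kernel_def)

definition expo_diff :: "(nat \<Rightarrow>\<^sub>0 nat) \<Rightarrow> (nat \<Rightarrow>\<^sub>0 nat) \<Rightarrow> nat \<Rightarrow> int" where
  "expo_diff m m' i = int (Poly_Mapping.lookup m i) - int (Poly_Mapping.lookup m' i)"

lemma poly_ring_iff: "f \<in> poly_ring n \<longleftrightarrow> (\<forall>m\<in>Poly_Mapping.keys f. Poly_Mapping.keys m \<subseteq> {..<n})"
  by (simp add: poly_ring_def subset_iff in_keys_iff)

lemma expo_eq_iff_in_kernel:
  assumes "Poly_Mapping.keys m \<subseteq> {..<n}" "Poly_Mapping.keys m' \<subseteq> {..<n}"
  shows "expo r a m = expo r a m' \<longleftrightarrow> in_kernel n r a (expo_diff m m')"
proof -
  have expo_sum: "expo r a \<mu> k = (if k < r then (\<Sum>i<n. int (Poly_Mapping.lookup \<mu> i) * a i k) else 0)"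
    if "Poly_Mapping.keys \<mu> \<subseteq> {..<n}" for \<mu> k
    using that by (auto simp: expo_def in_keys_iff intro!: sum.mono_neutral_left)
  show ?thesis
    unfolding fun_eq_iff expo_sum[OF assms(1)] expo_sum[OF assms(2)] in_kernel_def expo_diff_def
    by (simp add: left_diff_distrib sum_subtractf)
qed

definition binom :: "(nat \<Rightarrow>\<^sub>0 nat) \<Rightarrow> (nat \<Rightarrow>\<^sub>0 nat) \<Rightarrow> 'k::comm_ring_1 mpoly" where
  "binom m m' = Poly_Mapping.single m 1 - Poly_Mapping.single m' 1"

lemma lookup_binom:
  "Poly_Mapping.lookup (binom m m' :: 'k::comm_ring_1 mpoly) x = of_bool (x = m) - of_bool (x = m')"
  by (simp add: binom_def lookup_minus lookup_single when_def)

lemma keys_binom: "m \<noteq> m' \<Longrightarrow> Poly_Mapping.keys (binom m m' :: 'k::comm_ring_1 mpoly) = {m, m'}"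
  by (auto simp: in_keys_iff lookup_binom)

lemma eval_indicator_binom:
  "eval_indicator T (binom m m' :: 'k::comm_ring_1 mpoly) =
    of_bool (Poly_Mapping.keys m \<subseteq> T) - of_bool (Poly_Mapping.keys m' \<subseteq> T)"
  by (simp add: binom_def lin_ext_diff)

lemma binom_in_toric_ideal:
  assumes "Poly_Mapping.keys m \<subseteq> {..<n}" "Poly_Mapping.keys m' \<subseteq> {..<n}"
    and "expo r a m = expo r a m'"
  shows "(binom m m' :: 'k::field mpoly) \<in> toric_ideal n r a"
proof (cases "m = m'")
  case True
  then show ?thesis by (simp add: binom_def toric_ideal_def poly_ring_def)
next
  case False
  have "(\<Sum>x\<in>{x \<in> {m, m'}. expo r a x = e}. of_bool (x = m) - of_bool (x = m') :: 'k) = 0" for e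
  proof (cases "expo r a m = e")
    case True
    then have "{x \<in> {m, m'}. expo r a x = e} = {m, m'}" using assms(3) by auto
    then show ?thesis using \<open>m \<noteq> m'\<close> by simp
  next
    case False
    then have "{x \<in> {m, m'}. expo r a x = e} = {}" using assms(3) by auto
    then show ?thesis by (simp only: sum.empty)
  qed
  then show ?thesis
    using assms False by (simp add: toric_ideal_def poly_ring_iff keys_binom lookup_binom)
qed

lemma expo_eq_if_binom_in_toric_ideal:
  assumes "m \<noteq> m'" "(binom m m' :: 'k::field mpoly) \<in> toric_ideal n r a"
  shows "expo r a m = expo r a m'"
proof (rule ccontr)
  assume "expo r a m \<noteq> expo r a m'"
  then have "{x \<in> {m, m'}. expo r a x = expo r a m} = {m}" by auto
  moreover have "(\<Sum>x\<in>{x \<in> Poly_Mapping.keys (binom m m' :: 'k mpoly). expo r a x = expo r a m}.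
      Poly_Mapping.lookup (binom m m' :: 'k mpoly) x) = 0"
    using assms(2) by (simp add: toric_ideal_def)
  ultimately show False
    using assms(1) by (simp add: keys_binom lookup_binom)
qed

definition pos_support :: "nat \<Rightarrow> (nat \<Rightarrow> int) \<Rightarrow> nat set" where
  "pos_support n v = {j. j < n \<and> v j > 0}"

definition pos_monomial :: "nat \<Rightarrow> (nat \<Rightarrow> int) \<Rightarrow> nat \<Rightarrow>\<^sub>0 nat" where
  "pos_monomial n v = Abs_poly_mapping (\<lambda>j. if j < n then nat (v j) else 0)"

lemma lookup_pos_monomial:
  "Poly_Mapping.lookup (pos_monomial n v) j = (if j < n then nat (v j) else 0)"
proof -
  have "finite {j. (if j < n then nat (v j) else 0) \<noteq> 0}"
    by (rule finite_subset[of _ "{..<n}"]) auto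
  then show ?thesis by (simp add: pos_monomial_def)
qed

lemma keys_pos_monomial: "Poly_Mapping.keys (pos_monomial n v) = pos_support n v"
  by (auto simp: in_keys_iff lookup_pos_monomial pos_support_def split: if_splits)

lemma binom_pos_neg_in_toric_ideal:
  assumes "in_kernel n r a v"
  shows "(binom (pos_monomial n v) (pos_monomial n (\<lambda>j. - v j)) :: 'k::field mpoly) \<in> toric_ideal n r a"
proof -
  have keys: "Poly_Mapping.keys (pos_monomial n u) \<subseteq> {..<n}" for u
    by (auto simp: keys_pos_monomial pos_support_def)
  have "in_kernel n r a (expo_diff (pos_monomial n v) (pos_monomial n (\<lambda>j. - v j)))"
    using assms by (rule in_kernel_cong[THEN iffD1, rotated])
      (simp add: expo_diff_def lookup_pos_monomial)
  then show ?thesis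
    using expo_eq_iff_in_kernel[OF keys keys] by (blast intro: binom_in_toric_ideal[OF keys keys])
qed

lemma toric_ideal_sum_over_fibres:
  assumes f: "f \<in> (toric_ideal n r a :: 'k::field mpoly set)" and S: "S \<subseteq> Poly_Mapping.keys f"
    and closed: "\<And>x y. x \<in> S \<Longrightarrow> y \<in> Poly_Mapping.keys f \<Longrightarrow> expo r a y = expo r a x \<Longrightarrow> y \<in> S"
  shows "(\<Sum>x\<in>S. Poly_Mapping.lookup f x) = 0"
proof -
  have "finite S" using S by (simp add: finite_subset)
  then have "(\<Sum>x\<in>S. Poly_Mapping.lookup f x) =
      (\<Sum>e\<in>expo r a ` S. \<Sum>x\<in>{x\<in>S. expo r a x = e}. Poly_Mapping.lookup f x)"
    by (rule sum.image_gen)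
  also have "\<dots> = 0"
  proof (rule sum.neutral, rule ballI)
    fix e assume "e \<in> expo r a ` S"
    then obtain x0 where "x0 \<in> S" "e = expo r a x0" by blast
    then have "{x\<in>S. expo r a x = e} = {x \<in> Poly_Mapping.keys f. expo r a x = e}"
      using S closed[OF \<open>x0 \<in> S\<close>] by auto
    then show "(\<Sum>x\<in>{x\<in>S. expo r a x = e}. Poly_Mapping.lookup f x) = 0"
      using f by (simp add: toric_ideal_def)
  qed
  finally show ?thesis .
qed

lemma toric_ideal_subset:
  assumes "\<And>m m'. Poly_Mapping.keys m \<subseteq> {..<n} \<Longrightarrow> Poly_Mapping.keys m' \<subseteq> {..<n} \<Longrightarrow>
      expo r a m = expo r a m' \<Longrightarrow> expo r' a' m = expo r' a' m'"
  shows "(toric_ideal n r a :: 'k::field mpoly set) \<subseteq> toric_ideal n r' a'"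
proof
  fix f :: "'k mpoly" assume f: "f \<in> toric_ideal n r a"
  then have "f \<in> poly_ring n" by (simp add: toric_ideal_def)
  have "(\<Sum>x\<in>{x \<in> Poly_Mapping.keys f. expo r' a' x = e}. Poly_Mapping.lookup f x) = 0" for e
  proof (rule toric_ideal_sum_over_fibres[OF f])
    fix x y assume x: "x \<in> {x \<in> Poly_Mapping.keys f. expo r' a' x = e}"
      and y: "y \<in> Poly_Mapping.keys f" and "expo r a y = expo r a x"
    then have "expo r' a' y = expo r' a' x"
      using \<open>f \<in> poly_ring n\<close> by (intro assms) (auto simp: poly_ring_iff)
    with x y show "y \<in> {x \<in> Poly_Mapping.keys f. expo r' a' x = e}" by simp
  qed auto
  with \<open>f \<in> poly_ring n\<close> show "f \<in> toric_ideal n r' a'" by (simp add: toric_ideal_def)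
qed

lemma toric_ideal_subset_if_kernel_subset:
  assumes "\<And>u. in_kernel n r a u \<Longrightarrow> in_kernel n r' a' u"
  shows "(toric_ideal n r a :: 'k::field mpoly set) \<subseteq> toric_ideal n r' a'"
proof (rule toric_ideal_subset)
  fix m m' :: "nat \<Rightarrow>\<^sub>0 nat"
  assume m: "Poly_Mapping.keys m \<subseteq> {..<n}" "Poly_Mapping.keys m' \<subseteq> {..<n}"
  then show "expo r a m = expo r a m' \<Longrightarrow> expo r' a' m = expo r' a' m'"
    using assms by (simp add: expo_eq_iff_in_kernel)
qed

definition fibre_saturated :: "nat \<Rightarrow> nat \<Rightarrow> (nat \<Rightarrow> nat \<Rightarrow> int) \<Rightarrow> nat set \<Rightarrow> bool" where
  "fibre_saturated n r a T \<longleftrightarrow> (\<forall>m m'. Poly_Mapping.keys m \<subseteq> {..<n} \<longrightarrow> Poly_Mapping.keys m' \<subseteq> {..<n} \<longrightarrow>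
      expo r a m = expo r a m' \<longrightarrow> (Poly_Mapping.keys m \<subseteq> T \<longleftrightarrow> Poly_Mapping.keys m' \<subseteq> T))"

lemma eval_indicator_toric_ideal:
  assumes "fibre_saturated n r a T" and f: "f \<in> (toric_ideal n r a :: 'k::field mpoly set)"
  shows "eval_indicator T f = 0"
proof -
  have "f \<in> poly_ring n" using f by (simp add: toric_ideal_def)
  have "eval_indicator T f = (\<Sum>m\<in>{m\<in>Poly_Mapping.keys f. Poly_Mapping.keys m \<subseteq> T}. Poly_Mapping.lookup f m)"
    by (simp add: lin_ext_def sum.inter_filter[symmetric] Int_def)
  also have "\<dots> = 0"
  proof (rule toric_ideal_sum_over_fibres[OF f])
    fix x y assume x: "x \<in> {m\<in>Poly_Mapping.keys f. Poly_Mapping.keys m \<subseteq> T}"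
      and y: "y \<in> Poly_Mapping.keys f" and "expo r a y = expo r a x"
    then have "Poly_Mapping.keys y \<subseteq> T \<longleftrightarrow> Poly_Mapping.keys x \<subseteq> T"
      using assms(1) \<open>f \<in> poly_ring n\<close> unfolding fibre_saturated_def poly_ring_iff by blast
    with x y show "y \<in> {m\<in>Poly_Mapping.keys f. Poly_Mapping.keys m \<subseteq> T}" by simp
  qed auto
  finally show ?thesis .
qed

lemma unsaturated_imp_kernel_vector:
  assumes sub: "(toric_ideal n r a :: 'k::field mpoly set) \<subseteq> toric_ideal n r' a'"
    and "\<not> fibre_saturated n r a T"
  shows "\<exists>w. in_kernel n r a w \<and> in_kernel n r' a' w \<and> (\<exists>j<n. w j \<noteq> 0) \<and>
    (\<forall>j<n. j \<notin> T \<longrightarrow> w j \<le> 0)"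
proof -
  obtain m m' where m: "Poly_Mapping.keys m \<subseteq> {..<n}" "Poly_Mapping.keys m' \<subseteq> {..<n}"
    and "expo r a m = expo r a m'" and T: "Poly_Mapping.keys m \<subseteq> T" "\<not> Poly_Mapping.keys m' \<subseteq> T"
  proof -
    obtain m0 m0' where "Poly_Mapping.keys m0 \<subseteq> {..<n}" "Poly_Mapping.keys m0' \<subseteq> {..<n}"
      "expo r a m0 = expo r a m0'" "\<not> (Poly_Mapping.keys m0 \<subseteq> T \<longleftrightarrow> Poly_Mapping.keys m0' \<subseteq> T)"
      using assms(2) unfolding fibre_saturated_def by blast
    then show thesis
      using that[of m0 m0'] that[of m0' m0] by (cases "Poly_Mapping.keys m0 \<subseteq> T") simp_all
  qed
  have "m \<noteq> m'" using T by blast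
  have "(binom m m' :: 'k mpoly) \<in> toric_ideal n r a"
    by (rule binom_in_toric_ideal[OF m \<open>expo r a m = expo r a m'\<close>])
  then have "(binom m m' :: 'k mpoly) \<in> toric_ideal n r' a'" using sub by (rule subsetD[rotated])
  then have "expo r' a' m = expo r' a' m'" by (rule expo_eq_if_binom_in_toric_ideal[OF \<open>m \<noteq> m'\<close>])
  then have kernels: "in_kernel n r a (expo_diff m m')" "in_kernel n r' a' (expo_diff m m')"
    using \<open>expo r a m = expo r a m'\<close> by (simp_all add: expo_eq_iff_in_kernel[OF m])
  obtain j where j: "Poly_Mapping.lookup m j \<noteq> Poly_Mapping.lookup m' j"
    using \<open>m \<noteq> m'\<close> by (meson poly_mapping_eqI)
  then have "j \<in> Poly_Mapping.keys m \<union> Poly_Mapping.keys m'" by (auto simp: in_keys_iff)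
  then have "j < n" using m by auto
  moreover have "expo_diff m m' j \<noteq> 0" using j by (simp add: expo_diff_def)
  moreover have "expo_diff m m' i \<le> 0" if "i \<notin> T" for i
  proof -
    have "Poly_Mapping.lookup m i = 0" using that T(1) by (auto simp: in_keys_iff)
    then show ?thesis by (simp add: expo_diff_def)
  qed
  ultimately show ?thesis using kernels by blast
qed

lemma zero_in_toric_ideal: "0 \<in> toric_ideal n r a"
  by (simp add: toric_ideal_def poly_ring_def)

lemma toric_ideal_subset_ideal_sum:
  "i < s \<Longrightarrow> toric_ideal n (r i) (a i) \<subseteq> ideal_sum s (\<lambda>i. toric_ideal n (r i) (a i))"
proof
  fix f assume "i < s" "f \<in> toric_ideal n (r i) (a i)"
  then have "(\<Sum>j<s. if j = i then f else 0) = f" "\<forall>j<s. (if j = i then f else 0) \<in> toric_ideal n (r j) (a j)"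
    by (simp_all add: zero_in_toric_ideal)
  then show "f \<in> ideal_sum s (\<lambda>i. toric_ideal n (r i) (a i))"
    unfolding ideal_sum_def by (auto intro!: exI[of _ "\<lambda>j. if j = i then f else 0"])
qed

lemma eval_indicator_ideal_sum:
  assumes "\<forall>i<s. fibre_saturated n (r i) (a i) T"
    and "g \<in> ideal_sum s (\<lambda>i. toric_ideal n (r i) (a i) :: 'k::field mpoly set)"
  shows "eval_indicator T g = 0"
proof -
  obtain h where "g = (\<Sum>i<s. h i)" "\<forall>i<s. h i \<in> (toric_ideal n (r i) (a i) :: 'k mpoly set)"
    using assms(2) unfolding ideal_sum_def by blast
  then show ?thesis
    using assms(1) by (auto simp: lin_ext_sum intro!: sum.neutral eval_indicator_toric_ideal)
qed

lemma ideal_subset_radical_in: "J \<inter> poly_ring n \<subseteq> radical_in n J"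
  by (auto simp: radical_in_def intro!: exI[of _ 1])

lemma splitting_obtain_cover:
  fixes I :: "'k::field mpoly set"
  assumes "I \<subseteq> poly_ring n" and "has_splitting n I s \<or> has_rad_splitting n I s"
  obtains r a where "\<forall>i<s. toric_ideal n (r i) (a i) \<noteq> I" "\<forall>i<s. toric_ideal n (r i) (a i) \<subseteq> I"
    "I \<subseteq> radical_in n (ideal_sum s (\<lambda>i. toric_ideal n (r i) (a i)))"
proof -
  obtain r a where ne: "\<forall>i<s. toric_ideal n (r i) (a i) \<noteq> I" and
    "I = ideal_sum s (\<lambda>i. toric_ideal n (r i) (a i)) \<or>
     I = radical_in n (ideal_sum s (\<lambda>i. toric_ideal n (r i) (a i)))"
    using assms(2) unfolding has_splitting_def has_rad_splitting_def by blast
  then consider (sum) "I = ideal_sum s (\<lambda>i. toric_ideal n (r i) (a i))"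
    | (radical) "I = radical_in n (ideal_sum s (\<lambda>i. toric_ideal n (r i) (a i)))"
    by blast
  then show thesis
  proof cases
    case sum
    have "I \<subseteq> ideal_sum s (\<lambda>i. toric_ideal n (r i) (a i)) \<inter> poly_ring n"
      using sum assms(1) by blast
    then show thesis
      using that[OF ne] toric_ideal_subset_ideal_sum[of _ s n r a] ideal_subset_radical_in sum
      by blast
  next
    case radical
    have "toric_ideal n (r i) (a i) \<subseteq> ideal_sum s (\<lambda>i. toric_ideal n (r i) (a i)) \<inter> poly_ring n"
      if "i < s" for i
      using toric_ideal_subset_ideal_sum[OF that, of n r a] by (auto simp: toric_ideal_def)
    then show thesis
      using that[OF ne] ideal_subset_radical_in radical by blast
  qed
qed

section \<open>Relations among moment vectors\<close>

lemma in_kernel_moments_poly: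
  assumes "in_kernel n r (\<lambda>i k. t i ^ k) v" "degree p < r"
  shows "(\<Sum>i<n. v i * poly p (t i)) = 0"
proof -
  have "(\<Sum>i<n. v i * poly p (t i)) = (\<Sum>k\<le>degree p. coeff p k * (\<Sum>i<n. v i * t i ^ k))"
    by (simp add: poly_altdef sum_distrib_left mult_ac sum.swap[of _ "{..<n}"])
  also have "\<dots> = 0"
    using assms by (simp add: in_kernel_def)
  finally show ?thesis .
qed

lemma in_kernel_moments_eq_0:
  assumes v: "in_kernel n r (\<lambda>i k. t i ^ k) v" and t: "inj_on t {..<n}"
    and S: "S \<subseteq> {..<n}" "card S \<le> r" and zero: "\<And>i. i < n \<Longrightarrow> i \<notin> S \<Longrightarrow> v i = 0"
    and "j < n"
  shows "v j = 0"
proof (cases "j \<in> S")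
  case True
  have "finite S" using S(1) by (simp add: finite_subset)
  define Q where "Q = (\<Prod>i\<in>S - {j}. [:- t i, 1:])"
  have "degree Q \<le> card (S - {j})"
    unfolding Q_def using degree_prod_sum_le[of "S - {j}" "\<lambda>i. [:- t i, 1:]"] \<open>finite S\<close> by simp
  moreover have "card S > 0" using True \<open>finite S\<close> by (auto simp: card_gt_0_iff)
  ultimately have "degree Q < r" using S(2) True \<open>finite S\<close> by (simp add: card_Diff_singleton)
  have Q_vanishes: "v i * poly Q (t i) = 0" if "i \<in> {..<n} - {j}" for i
    using that zero \<open>finite S\<close> by (cases "i \<in> S") (auto simp: Q_def poly_prod)
  have "0 = (\<Sum>i<n. v i * poly Q (t i))"
    using in_kernel_moments_poly[OF v \<open>degree Q < r\<close>] by simp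
  also have "\<dots> = v j * poly Q (t j)"
    using \<open>j < n\<close> Q_vanishes by (simp add: sum.remove[of _ j] sum.neutral)
  finally have "v j * poly Q (t j) = 0" ..
  moreover have "poly Q (t j) \<noteq> 0"
    using t S(1) True \<open>finite S\<close> by (auto simp: Q_def poly_prod dest: inj_onD)
  ultimately show ?thesis by simp
qed (use zero \<open>j < n\<close> in simp)

lemma in_kernel_moments_card_le:
  assumes v: "in_kernel n r (\<lambda>i k. t i ^ k) v" and t: "inj_on t {..<n}"
    and S: "S \<subseteq> {..<n}" and nonpos: "\<And>i. i < n \<Longrightarrow> i \<notin> S \<Longrightarrow> v i \<le> 0"
    and "j < n" "v j \<noteq> 0"
  shows "r \<le> 2 * card S"
proof (rule ccontr)
  assume "\<not> r \<le> 2 * card S"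
  have "finite S" using S by (simp add: finite_subset)
  define P where "P = (\<Prod>i\<in>S. [:- t i, 1:] ^ 2)"
  have "degree P \<le> (\<Sum>i\<in>S. degree ([:- t i, 1:] ^ 2))"
    unfolding P_def using degree_prod_sum_le[OF \<open>finite S\<close>] by (simp add: o_def)
  also have "\<dots> = 2 * card S" by (simp add: degree_power_eq)
  finally have "degree P < r" using \<open>\<not> r \<le> 2 * card S\<close> by linarith
  \<comment> \<open>P is a square vanishing exactly on S, so testing v against P forces v = 0 off S.\<close>
  have poly_P: "poly P (t l) = (\<Prod>i\<in>S. (t l - t i) ^ 2)" for l
    by (simp add: P_def poly_prod)
  have "(\<Sum>l<n. - (v l * poly P (t l))) = 0"
    using in_kernel_moments_poly[OF v \<open>degree P < r\<close>] by (simp add: sum_negf)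
  moreover have "0 \<le> - (v l * poly P (t l))" if "l < n" for l
  proof (cases "l \<in> S")
    case True
    then have "poly P (t l) = 0" using \<open>finite S\<close> by (auto simp: poly_P prod_zero_iff)
    then show ?thesis by simp
  next
    case False
    then show ?thesis
      using nonpos[OF that] by (simp add: poly_P mult_nonpos_nonneg prod_nonneg)
  qed
  ultimately have terms_zero: "v l * poly P (t l) = 0" if "l < n" for l
    using sum_nonneg_eq_0_iff[of "{..<n}" "\<lambda>l. - (v l * poly P (t l))"] that by simp
  have "v l = 0" if "l < n" "l \<notin> S" for l
  proof -
    have "poly P (t l) \<noteq> 0"
      using that S t \<open>finite S\<close> by (auto simp: poly_P dest: inj_onD)
    then show ?thesis using terms_zero[OF that(1)] by simp
  qed
  then have "v j = 0"
    using in_kernel_moments_eq_0[OF v t S] \<open>\<not> r \<le> 2 * card S\<close> \<open>j < n\<close> by simp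
  with \<open>v j \<noteq> 0\<close> show False ..
qed

lemma in_kernel_moments_eq_0_if_0_1:
  assumes v: "in_kernel n r (\<lambda>i k. t i ^ k) v" and t: "inj_on t {..<n}" and "n \<le> r + 2"
    and "v 0 = 0" "v 1 = 0" and "j < n"
  shows "v j = 0"
proof (rule in_kernel_moments_eq_0[OF v t, of "{2..<n}"])
  fix i assume "i < n" "i \<notin> {2..<n}"
  then have "i = 0 \<or> i = 1" by auto
  then show "v i = 0" using assms by auto
qed (use assms in auto)

lemma in_kernel_moments_span:
  assumes "n \<le> r + 2" and t: "inj_on t {..<n}"
    and w1: "in_kernel n r (\<lambda>i k. t i ^ k) w1" "in_kernel n r' b w1"
    and w2: "in_kernel n r (\<lambda>i k. t i ^ k) w2" "in_kernel n r' b w2"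
    and minor: "w1 0 * w2 1 - w1 1 * w2 0 \<noteq> 0"
    and u: "in_kernel n r (\<lambda>i k. t i ^ k) u"
  shows "in_kernel n r' b u"
proof -
  define x where "x = u 0 * w2 1 - u 1 * w2 0"
  define y where "y = w1 0 * u 1 - w1 1 * u 0"
  define z where "z i = (w1 0 * w2 1 - w1 1 * w2 0) * u i - (x * w1 i + y * w2 i)" for i
  have "in_kernel n r (\<lambda>i k. t i ^ k) z"
    using in_kernel_lincomb[OF u in_kernel_lincomb[OF w1(1) w2(1)],
        of "w1 0 * w2 1 - w1 1 * w2 0" "-1" x y]
    by (simp add: z_def[abs_def] algebra_simps)
  moreover have "z 0 = 0" "z 1 = 0" by (simp_all add: z_def x_def y_def algebra_simps)
  ultimately have "z i = 0" if "i < n" for i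
    using in_kernel_moments_eq_0_if_0_1[OF _ t \<open>n \<le> r + 2\<close>] that by blast
  then have "in_kernel n r' b (\<lambda>i. (w1 0 * w2 1 - w1 1 * w2 0) * u i)"
    using in_kernel_lincomb[OF w1(2) w2(2), of x y] by (subst in_kernel_cong) (auto simp: z_def)
  then show ?thesis by (rule in_kernel_mult_cancel[OF minor])
qed

lemma in_kernel_moments_proportional:
  assumes "n \<le> r + 2" and t: "inj_on t {..<n}"
    and w1: "in_kernel n r (\<lambda>i k. t i ^ k) w1" "\<exists>j<n. w1 j \<noteq> 0"
    and w2: "in_kernel n r (\<lambda>i k. t i ^ k) w2" "\<exists>j<n. w2 j \<noteq> 0"
    and minor: "w1 0 * w2 1 - w1 1 * w2 0 = 0"
  shows "\<exists>\<alpha> \<beta>. \<alpha> \<noteq> 0 \<and> \<beta> \<noteq> 0 \<and> (\<forall>j<n. \<alpha> * w1 j = \<beta> * w2 j)"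
proof -
  obtain c where c: "c = 0 \<or> c = 1" "w1 c \<noteq> 0"
    using in_kernel_moments_eq_0_if_0_1[OF w1(1) t \<open>n \<le> r + 2\<close>] w1(2) by blast
  define z where "z j = w2 c * w1 j - w1 c * w2 j" for j
  have "in_kernel n r (\<lambda>i k. t i ^ k) z"
    using in_kernel_lincomb[OF w1(1) w2(1), of "w2 c" "- w1 c"] by (simp add: z_def[abs_def])
  moreover have "z 0 = 0" "z 1 = 0" using c(1) minor by (auto simp: z_def algebra_simps)
  ultimately have "z j = 0" if "j < n" for j
    using in_kernel_moments_eq_0_if_0_1[OF _ t \<open>n \<le> r + 2\<close>] that by blast
  then have proportional: "w2 c * w1 j = w1 c * w2 j" if "j < n" for j
    using that by (simp add: z_def)
  moreover have "w2 c \<noteq> 0"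
  proof
    assume "w2 c = 0"
    then have "w2 j = 0" if "j < n" for j using proportional[OF that] c(2) by simp
    then show False using w2(2) by blast
  qed
  ultimately show ?thesis using c(2) by blast
qed

lemma card_pos_neg_support:
  assumes v: "in_kernel (2*d+1) (2*d-1) (\<lambda>i k. t i ^ k) v" and t: "inj_on t {..<2*d+1}"
    and "e < 2*d+1" "v e = 0" and "j < 2*d+1" "v j \<noteq> 0"
  shows "card (pos_support (2*d+1) v) = d" "card (pos_support (2*d+1) (\<lambda>i. - v i)) = d"
proof -
  let ?P = "pos_support (2*d+1) v" and ?N = "pos_support (2*d+1) (\<lambda>i. - v i)"
  have "2*d-1 \<le> 2 * card ?P"
    by (rule in_kernel_moments_card_le[OF v t _ _ \<open>j < 2*d+1\<close> \<open>v j \<noteq> 0\<close>])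
      (auto simp: pos_support_def)
  moreover have "2*d-1 \<le> 2 * card ?N"
    by (rule in_kernel_moments_card_le[OF in_kernel_uminus[OF v] t _ _ \<open>j < 2*d+1\<close>])
      (use \<open>v j \<noteq> 0\<close> in \<open>auto simp: pos_support_def\<close>)
  moreover have "card ?P + card ?N \<le> 2*d"
  proof -
    have "?P \<union> ?N \<subseteq> {..<2*d+1} - {e}" using \<open>v e = 0\<close> by (auto simp: pos_support_def)
    then have "card (?P \<union> ?N) \<le> 2*d"
      using card_mono[of "{..<2*d+1} - {e}" "?P \<union> ?N"] \<open>e < 2*d+1\<close> by simp
    moreover have "?P \<inter> ?N = {}" by (auto simp: pos_support_def)
    ultimately show ?thesis by (simp add: card_Un_disjoint pos_support_def)
  qed
  ultimately show "card ?P = d" "card ?N = d" by linarith+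
qed

section \<open>Circuits from finite differences\<close>

definition alt_binomial_sum :: "nat \<Rightarrow> (nat \<Rightarrow> int) \<Rightarrow> int" where
  "alt_binomial_sum M f = (\<Sum>j\<le>M. (-1) ^ j * int (M choose j) * f j)"

lemma alt_binomial_sum_Suc:
  "alt_binomial_sum (Suc M) f = alt_binomial_sum M f - alt_binomial_sum M (\<lambda>j. f (Suc j))"
proof -
  let ?tail = "\<lambda>N. (\<Sum>j\<le>M. (-1) ^ Suc j * int (N choose Suc j) * f (Suc j))"
  have "alt_binomial_sum M f = (\<Sum>j\<le>Suc M. (-1) ^ j * int (M choose j) * f j)"
    by (simp add: alt_binomial_sum_def)
  then have "alt_binomial_sum M f = f 0 + ?tail M"
    by (simp only: sum.atMost_Suc_shift) simp
  moreover have "alt_binomial_sum (Suc M) f = f 0 + ?tail (Suc M)"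
    by (simp only: alt_binomial_sum_def sum.atMost_Suc_shift) simp
  moreover have "?tail (Suc M) = ?tail M + (\<Sum>j\<le>M. (-1) ^ Suc j * int (M choose j) * f (Suc j))"
    by (simp add: sum.distrib[symmetric] algebra_simps)
  moreover have "(\<Sum>j\<le>M. (-1) ^ Suc j * int (M choose j) * f (Suc j)) =
      - alt_binomial_sum M (\<lambda>j. f (Suc j))"
    by (simp add: alt_binomial_sum_def sum_negf[symmetric])
  ultimately show ?thesis by simp
qed

lemma alt_binomial_sum_diff:
  "alt_binomial_sum M f - alt_binomial_sum M g = alt_binomial_sum M (\<lambda>j. f j - g j)"
  by (simp add: alt_binomial_sum_def sum_subtractf[symmetric] algebra_simps)

lemma degree_diff_shift_less:
  fixes p :: "'a::idom poly"
  assumes "degree p > 0"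
  shows "degree (p - pcompose p [:1, 1:]) < degree p"
proof -
  have "coeff (pcompose p [:1, 1:]) (degree p) = lead_coeff p"
    using lead_coeff_comp[of "[:1, 1:]" p] by (simp add: degree_pcompose)
  then have "coeff (p - pcompose p [:1, 1:]) (degree p) = 0" by simp
  moreover have "degree (p - pcompose p [:1, 1:]) \<le> degree p"
    by (rule degree_diff_le) (simp_all add: degree_pcompose)
  ultimately show ?thesis
    using assms by (metis diff_self degree_0 leading_coeff_0_iff le_neq_implies_less)
qed

lemma alt_binomial_sum_poly:
  assumes "degree p < M"
  shows "alt_binomial_sum M (\<lambda>j. poly p (int j)) = 0"
  using assms
proof (induction M arbitrary: p)
  case (Suc M)
  define q where "q = p - pcompose p [:1, 1:]"
  have "alt_binomial_sum (Suc M) (\<lambda>j. poly p (int j)) = alt_binomial_sum M (\<lambda>j. poly q (int j))"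
    by (simp add: alt_binomial_sum_Suc alt_binomial_sum_diff q_def poly_pcompose add.commute)
  also have "\<dots> = 0"
  proof (cases "degree p = 0")
    case True
    then have "q = 0" by (auto simp: q_def elim: degree_eq_zeroE)
    then show ?thesis by (simp add: alt_binomial_sum_def)
  next
    case False
    then have "degree q < M" using degree_diff_shift_less[of p] Suc.prems by (simp add: q_def)
    then show ?thesis by (rule Suc.IH)
  qed
  finally show ?case .
qed simp

definition circuit :: "nat \<Rightarrow> nat \<Rightarrow> nat \<Rightarrow> int" where
  "circuit M e j = (-1) ^ j * int (M choose j) * (int e - int j)"

lemma in_kernel_circuit: "in_kernel (Suc M) (M - 1) (\<lambda>i k. int i ^ k) (circuit M e)"
  unfolding in_kernel_def
proof (intro allI impI)
  fix k assume "k < M - 1"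
  define p :: "int poly" where "p = [:int e, -1:] * monom 1 k"
  have "degree p \<le> 1 + k"
    unfolding p_def using degree_mult_le[of "[:int e, -1:]" "monom 1 k"] by (simp add: degree_monom_eq)
  then have "degree p < M" using \<open>k < M - 1\<close> by linarith
  have "(\<Sum>j<Suc M. circuit M e j * int j ^ k) = alt_binomial_sum M (\<lambda>j. poly p (int j))"
    by (simp add: alt_binomial_sum_def circuit_def p_def poly_monom lessThan_Suc_atMost algebra_simps)
  also have "\<dots> = 0" by (rule alt_binomial_sum_poly[OF \<open>degree p < M\<close>])
  finally show "(\<Sum>j<Suc M. circuit M e j * int j ^ k) = 0" .
qed

section \<open>The cyclic configuration with t_j = j\<close>

abbreviation cyclic_ideal :: "nat \<Rightarrow> 'k::field mpoly set" where
  "cyclic_ideal d \<equiv> toric_ideal (2*d+1) (2*d-1) (cyclic_config d int)"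

abbreviation cyclic_kernel :: "nat \<Rightarrow> (nat \<Rightarrow> int) \<Rightarrow> bool" where
  "cyclic_kernel d \<equiv> in_kernel (2*d+1) (2*d-1) (\<lambda>i k. int i ^ k)"

lemma cyclic_config_int: "cyclic_config d int = (\<lambda>i k. int i ^ k)"
  by (simp add: cyclic_config_def)

lemma cyclic_kernel_circuit: "cyclic_kernel d (circuit (2*d) e)"
  using in_kernel_circuit[of "2*d" e] by simp

lemma card_circuit_supports:
  assumes "d \<ge> 1" "e \<le> 2*d"
  shows "card (pos_support (2*d+1) (circuit (2*d) e)) = d"
    "card (pos_support (2*d+1) (\<lambda>j. - circuit (2*d) e j)) = d"
proof -
  define j where "j = (if e = 0 then 1 else 0 :: nat)"
  have "j < 2*d+1" "circuit (2*d) e j \<noteq> 0" using assms by (auto simp: j_def circuit_def)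
  moreover have "e < 2*d+1" "circuit (2*d) e e = 0" using assms(2) by (simp_all add: circuit_def)
  moreover have "inj_on int {..<2*d+1}" by simp
  ultimately show "card (pos_support (2*d+1) (circuit (2*d) e)) = d"
    "card (pos_support (2*d+1) (\<lambda>j. - circuit (2*d) e j)) = d"
    using card_pos_neg_support[OF cyclic_kernel_circuit] by blast+
qed

definition circuit_support :: "nat \<Rightarrow> nat \<Rightarrow> nat set" where
  "circuit_support d i = pos_support (2*d+1) (circuit (2*d) (2*i))"

lemma circuit_support_subset: "circuit_support d i \<subseteq> {..<2*d+1}"
  by (auto simp: circuit_support_def pos_support_def)

lemma circuit_support_inj:
  assumes "i \<le> d" "i' \<le> d" "i \<noteq> i'"
  shows "circuit_support d i \<noteq> circuit_support d i'"
proof -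
  have "2 * min i i' \<notin> circuit_support d (min i i')" "2 * min i i' \<in> circuit_support d (max i i')"
    using assms by (auto simp: circuit_support_def pos_support_def circuit_def)
  then show ?thesis using assms by (metis max_def min_def)
qed

lemma card_Int_less:
  assumes "finite T1" "finite T2" "card T1 = card T2" "T1 \<noteq> T2"
  shows "card (T1 \<inter> T2) < card T1"
proof -
  have "\<not> T1 \<subseteq> T2" using card_subset_eq[OF assms(2)] assms(3,4) by auto
  then have "T1 \<inter> T2 \<subset> T1" by blast
  then show ?thesis by (rule psubset_card_mono[OF assms(1)])
qed

definition unsaturation_witness :: "nat \<Rightarrow> nat \<Rightarrow> (nat \<Rightarrow> nat \<Rightarrow> int) \<Rightarrow> nat set \<Rightarrow> (nat \<Rightarrow> int) \<Rightarrow> bool" where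
  "unsaturation_witness d r a T w \<longleftrightarrow> in_kernel (2*d+1) r a w \<and> cyclic_kernel d w \<and>
     (\<exists>j<2*d+1. w j \<noteq> 0) \<and> (\<forall>j<2*d+1. j \<notin> T \<longrightarrow> w j \<le> 0)"

lemma unsaturation_witnesses_opposite_signs:
  assumes "d \<ge> 1" and not_all: "\<exists>u. cyclic_kernel d u \<and> \<not> in_kernel (2*d+1) r a u"
    and w1: "unsaturation_witness d r a T1 w1" and w2: "unsaturation_witness d r a T2 w2"
    and T: "T1 \<subseteq> {..<2*d+1}" "card T1 = d" "card T2 = d" "T1 \<noteq> T2"
    and "j < 2*d+1"
  shows "sgn (w1 j) = - sgn (w2 j)"
proof -
  have inj: "inj_on int {..<2*d+1}" by simp
  have rank: "2*d+1 \<le> (2*d-1) + 2" using \<open>d \<ge> 1\<close> by simp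
  have "w1 0 * w2 1 - w1 1 * w2 0 = 0"
    using in_kernel_moments_span[OF rank inj, of w1 r a w2] w1 w2 not_all
    by (auto simp: unsaturation_witness_def)
  then obtain \<alpha> \<beta> where "\<alpha> \<noteq> 0" "\<beta> \<noteq> 0" and ab: "\<forall>j<2*d+1. \<alpha> * w1 j = \<beta> * w2 j"
    using in_kernel_moments_proportional[OF rank inj, of w1 w2] w1 w2
    by (auto simp: unsaturation_witness_def)
  have sgn_ab: "sgn \<alpha> * sgn (w1 i) = sgn \<beta> * sgn (w2 i)" if "i < 2*d+1" for i
    using ab that by (metis sgn_mult)
  have "sgn \<alpha> \<noteq> sgn \<beta>"
  proof
    assume "sgn \<alpha> = sgn \<beta>"
    then have same: "sgn (w1 i) = sgn (w2 i)" if "i < 2*d+1" for i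
      using sgn_ab[OF that] \<open>\<beta> \<noteq> 0\<close> by (simp add: sgn_0_0)
    obtain j0 where "j0 < 2*d+1" "w1 j0 \<noteq> 0" using w1 by (auto simp: unsaturation_witness_def)
    have "w1 i \<le> 0" if "i < 2*d+1" "i \<notin> T1 \<inter> T2" for i
      using w1 w2 same[OF that(1)] that by (auto simp: unsaturation_witness_def sgn_if split: if_splits)
    then have "2*d-1 \<le> 2 * card (T1 \<inter> T2)"
      using in_kernel_moments_card_le[where v=w1 and S="T1 \<inter> T2" and r="2*d-1", OF _ inj]
        \<open>j0 < 2*d+1\<close> \<open>w1 j0 \<noteq> 0\<close> w1 T(1) by (auto simp: unsaturation_witness_def)
    moreover have "card (T1 \<inter> T2) < d"
      using card_Int_less[of T1 T2] T \<open>d \<ge> 1\<close> by (simp add: finite_subset card_ge_0_finite)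
    ultimately show False by linarith
  qed
  then have "sgn \<beta> = - sgn \<alpha>" using \<open>\<alpha> \<noteq> 0\<close> \<open>\<beta> \<noteq> 0\<close> by (auto simp: sgn_if split: if_splits)
  then have "sgn \<alpha> * sgn (w1 j) = sgn \<alpha> * (- sgn (w2 j))"
    using sgn_ab[OF \<open>j < 2*d+1\<close>] by simp
  moreover have "sgn \<alpha> \<noteq> 0" using \<open>\<alpha> \<noteq> 0\<close> by (simp add: sgn_0_0)
  ultimately show ?thesis by (metis mult_left_cancel)
qed

lemma card_unsaturated_circuit_supports:
  assumes "d \<ge> 1" and sub: "toric_ideal (2*d+1) r a \<subseteq> (cyclic_ideal d :: 'k::field mpoly set)"
    and ne: "toric_ideal (2*d+1) r a \<noteq> (cyclic_ideal d :: 'k mpoly set)"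
  shows "card {i. i \<le> d \<and> \<not> fibre_saturated (2*d+1) r a (circuit_support d i)} \<le> 2"
proof (rule ccontr)
  let ?B = "{i. i \<le> d \<and> \<not> fibre_saturated (2*d+1) r a (circuit_support d i)}"
  assume "\<not> card ?B \<le> 2"
  then have "3 \<le> card ?B" by simp
  then obtain C where "C \<subseteq> ?B" "card C = 3" by (rule obtain_subset_with_card_n)
  then obtain x y z where xyz: "x \<in> ?B" "y \<in> ?B" "z \<in> ?B" "x \<noteq> y" "y \<noteq> z" "x \<noteq> z"
    by (auto simp: card_3_iff)
  have not_all: "\<exists>u. cyclic_kernel d u \<and> \<not> in_kernel (2*d+1) r a u"
  proof (rule ccontr)
    assume "\<nexists>u. cyclic_kernel d u \<and> \<not> in_kernel (2*d+1) r a u"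
    then have "(cyclic_ideal d :: 'k mpoly set) \<subseteq> toric_ideal (2*d+1) r a"
      unfolding cyclic_config_int by (intro toric_ideal_subset_if_kernel_subset) blast
    with sub ne show False by blast
  qed
  have "\<exists>w. unsaturation_witness d r a (circuit_support d i) w" if "i \<in> ?B" for i
    using that unsaturated_imp_kernel_vector[OF sub[unfolded cyclic_config_int]]
    by (simp add: unsaturation_witness_def)
  then obtain w where w: "\<And>i. i \<in> ?B \<Longrightarrow> unsaturation_witness d r a (circuit_support d i) (w i)"
    by metis
  have card_support: "card (circuit_support d i) = d" if "i \<le> d" for i
    using card_circuit_supports(1)[OF \<open>d \<ge> 1\<close>, of "2*i"] that by (simp add: circuit_support_def)
  have opposite: "sgn (w i j) = - sgn (w i' j)"
    if "i \<in> ?B" "i' \<in> ?B" "i \<noteq> i'" "j < 2*d+1" for i i' j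
    using that
    by (intro unsaturation_witnesses_opposite_signs[OF \<open>d \<ge> 1\<close> not_all w w circuit_support_subset])
      (auto intro: card_support dest: circuit_support_inj)
  obtain j where "j < 2*d+1" "w x j \<noteq> 0"
    using w[OF xyz(1)] by (auto simp: unsaturation_witness_def)
  moreover have "sgn (w x j) = - sgn (w x j)"
    using opposite[OF xyz(1,2,4)] opposite[OF xyz(2,3,5)] opposite[OF xyz(1,3,6)] \<open>j < 2*d+1\<close>
    by simp
  ultimately show False by (simp add: sgn_0_0)
qed

lemma exists_saturated_circuit_support:
  assumes "d \<ge> 1" "2*s \<le> d"
    and sub: "\<forall>i<s. toric_ideal (2*d+1) (r i) (a i) \<subseteq> (cyclic_ideal d :: 'k::field mpoly set)"
    and ne: "\<forall>i<s. toric_ideal (2*d+1) (r i) (a i) \<noteq> (cyclic_ideal d :: 'k mpoly set)"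
  shows "\<exists>i0\<le>d. \<forall>i<s. fibre_saturated (2*d+1) (r i) (a i) (circuit_support d i0)"
proof (rule ccontr)
  define B where "B i = {i0. i0 \<le> d \<and> \<not> fibre_saturated (2*d+1) (r i) (a i) (circuit_support d i0)}" for i
  assume "\<not> ?thesis"
  then have "{..d} \<subseteq> (\<Union>i<s. B i)" by (auto simp: B_def)
  then have "d + 1 \<le> card (\<Union>i<s. B i)"
    using card_mono[of "\<Union>i<s. B i" "{..d}"] by (simp add: B_def)
  also have "\<dots> \<le> (\<Sum>i<s. card (B i))" by (rule card_UN_le) simp
  also have "\<dots> \<le> (\<Sum>i<s. 2)"
    using card_unsaturated_circuit_supports[where 'k='k, OF \<open>d \<ge> 1\<close>] sub ne
    by (intro sum_mono) (simp add: B_def)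
  finally show False using \<open>2*s \<le> d\<close> by simp
qed

lemma cyclic_ideal_eval_circuit_support:
  assumes "d \<ge> 1" "i \<le> d"
  shows "\<exists>f \<in> (cyclic_ideal d :: 'k::field mpoly set). eval_indicator (circuit_support d i) f = 1"
proof -
  let ?c = "circuit (2*d) (2*i)"
  let ?f = "binom (pos_monomial (2*d+1) ?c) (pos_monomial (2*d+1) (\<lambda>j. - ?c j)) :: 'k mpoly"
  have "?f \<in> cyclic_ideal d"
    unfolding cyclic_config_int by (rule binom_pos_neg_in_toric_ideal[OF cyclic_kernel_circuit])
  moreover have "\<not> pos_support (2*d+1) (\<lambda>j. - ?c j) \<subseteq> circuit_support d i"
  proof -
    have "pos_support (2*d+1) (\<lambda>j. - ?c j) \<noteq> {}"
      using card_circuit_supports(2)[OF assms(1), of "2*i"] assms by auto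
    moreover have "pos_support (2*d+1) (\<lambda>j. - ?c j) \<inter> circuit_support d i = {}"
      by (auto simp: pos_support_def circuit_support_def)
    ultimately show ?thesis by blast
  qed
  ultimately show ?thesis
    by (intro bexI[of _ ?f]) (simp_all add: eval_indicator_binom keys_pos_monomial circuit_support_def)
qed

lemma cyclic_ideal_not_subset_radical_of_sum:
  assumes "d \<ge> 1" "2*s \<le> d"
    and "\<forall>i<s. toric_ideal (2*d+1) (r i) (a i) \<subseteq> (cyclic_ideal d :: 'k::field mpoly set)"
    and "\<forall>i<s. toric_ideal (2*d+1) (r i) (a i) \<noteq> (cyclic_ideal d :: 'k mpoly set)"
  shows "\<not> (cyclic_ideal d :: 'k mpoly set) \<subseteq>
    radical_in (2*d+1) (ideal_sum s (\<lambda>i. toric_ideal (2*d+1) (r i) (a i)))"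
proof
  assume cover: "(cyclic_ideal d :: 'k mpoly set) \<subseteq>
    radical_in (2*d+1) (ideal_sum s (\<lambda>i. toric_ideal (2*d+1) (r i) (a i)))"
  obtain i0 where "i0 \<le> d" and saturated: "\<forall>i<s. fibre_saturated (2*d+1) (r i) (a i) (circuit_support d i0)"
    using exists_saturated_circuit_support[OF assms] by blast
  obtain f where "f \<in> (cyclic_ideal d :: 'k mpoly set)" "eval_indicator (circuit_support d i0) f = 1"
    using cyclic_ideal_eval_circuit_support[OF \<open>d \<ge> 1\<close> \<open>i0 \<le> d\<close>] by blast
  moreover obtain k where "f ^ k \<in> ideal_sum s (\<lambda>i. toric_ideal (2*d+1) (r i) (a i))"
    using cover \<open>f \<in> cyclic_ideal d\<close> unfolding radical_in_def by blast
  then have "eval_indicator (circuit_support d i0) (f ^ k) = 0"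
    by (rule eval_indicator_ideal_sum[OF saturated])
  ultimately show False by (simp add: eval_indicator_power)
qed

lemma cyclic_ideal_no_small_splitting:
  assumes "d \<ge> 1" "2*s \<le> d"
  shows "\<not> has_splitting (2*d+1) (cyclic_ideal d :: 'k::field mpoly set) s"
    "\<not> has_rad_splitting (2*d+1) (cyclic_ideal d :: 'k mpoly set) s"
proof -
  have "\<not> (has_splitting (2*d+1) (cyclic_ideal d :: 'k mpoly set) s \<or>
      has_rad_splitting (2*d+1) (cyclic_ideal d :: 'k mpoly set) s)"
  proof
    assume splitting: "has_splitting (2*d+1) (cyclic_ideal d :: 'k mpoly set) s \<or>
      has_rad_splitting (2*d+1) (cyclic_ideal d :: 'k mpoly set) s"
    have "(cyclic_ideal d :: 'k mpoly set) \<subseteq> poly_ring (2*d+1)"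
      by (auto simp: toric_ideal_def)
    then obtain r a where "\<forall>i<s. toric_ideal (2*d+1) (r i) (a i) \<noteq> (cyclic_ideal d :: 'k mpoly set)"
      "\<forall>i<s. toric_ideal (2*d+1) (r i) (a i) \<subseteq> (cyclic_ideal d :: 'k mpoly set)"
      "(cyclic_ideal d :: 'k mpoly set) \<subseteq>
        radical_in (2*d+1) (ideal_sum s (\<lambda>i. toric_ideal (2*d+1) (r i) (a i)))"
      using splitting by (rule splitting_obtain_cover)
    then show False using cyclic_ideal_not_subset_radical_of_sum[OF assms] by blast
  qed
  then show "\<not> has_splitting (2*d+1) (cyclic_ideal d :: 'k mpoly set) s"
    "\<not> has_rad_splitting (2*d+1) (cyclic_ideal d :: 'k mpoly set) s"
    by simp_all
qed

theorem proposition4p9: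
  assumes "N > (0::nat)"
  shows "\<exists>(d::nat) (t::nat \<Rightarrow> int). d \<ge> 2 \<and> strict_mono_on {..<2*d+1} t \<and>
    (\<forall>s<N. \<not> has_splitting (2*d+1)
        (toric_ideal (2*d+1) (2*d-1) (cyclic_config d t) :: 'k::field mpoly set) s) \<and>
    (\<forall>s<N. \<not> has_rad_splitting (2*d+1)
        (toric_ideal (2*d+1) (2*d-1) (cyclic_config d t) :: 'k::field mpoly set) s)"
proof -
  define d where "d = 2*N"
  have "d \<ge> 2" using assms by (simp add: d_def)
  moreover have "strict_mono_on {..<2*d+1} int" by (auto simp: strict_mono_on_def)
  moreover have "2*s \<le> d" if "s < N" for s using that by (simp add: d_def)
  ultimately show ?thesis
    using cyclic_ideal_no_small_splitting[where 'k='k, of d]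
    by (intro exI[of _ d] exI[of _ int]) auto
qed

end
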